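(* Let $0<\alpha\leq 1/2$. Then the equation $$\cos(2\pi\alpha) =\cos(2\pi\sqrt{\lambda}) - \frac{1-\sqrt{1-4\lambda}}{4\sqrt{\lambda}}\, \sin(2\pi\sqrt{\lambda})$$ has a unique solution $\lambda=\lambda_*(\alpha)$ in the interval $(0,\alpha^2)$. *)

theory Defs
  imports Complex_Main
begin

end

theory Submission
  imports Defs
begin

text \<open>
  Substitute \<open>s = sqrt \<lambda>\<close> and rationalise the coefficient:
  \<open>(1 - sqrt (1 - 4 s\<^sup>2)) / (4 s) = g s\<close> with \<open>g s = s / (1 + sqrt (1 - 4 s\<^sup>2))\<close>.
  For \<open>0 < s < 1/2\<close> the equation \<open>cos (2\<pi>s) - g s sin (2\<pi>s) = C\<close> with \<open>C = cos (2\<pi>\<alpha>)\<close>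
  says \<open>(cos (2\<pi>s) - C) / sin (2\<pi>s) = g s\<close>; the left side is strictly decreasing
  (its derivative is \<open>(C cos x - 1) / sin\<^sup>2 x < 0\<close>) and \<open>g\<close> strictly increasing, which gives
  uniqueness. Existence follows from the intermediate value theorem: the right-hand side
  is \<open>1 > C\<close> at \<open>s = 0\<close> and below \<open>C\<close> at \<open>s = \<alpha>\<close> when \<open>\<alpha> < 1/2\<close>; for \<open>\<alpha> = 1/2\<close>, where
  \<open>C = -1\<close>, a numerical evaluation at \<open>s = 12/25\<close> takes its place.
\<close>

lemma four_sq_le_one:
  fixes s :: real
  assumes "\<bar>s\<bar> \<le> 1/2"
  shows "4*s^2 \<le> 1"
  using abs_square_le_1[of "2*s"] assms by (simp add: power_mult_distrib)

lemma one_plus_sqrt_pos: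
  fixes s :: real
  assumes "\<bar>s\<bar> \<le> 1/2"
  shows "0 < 1 + sqrt (1 - 4*s^2)"
  using four_sq_le_one[OF assms] by (simp add: add_pos_nonneg)

lemma one_minus_sqrt_div_eq:
  fixes s :: real
  assumes "s \<noteq> 0" "4*s^2 \<le> 1"
  shows "(1 - sqrt (1 - 4*s^2)) / (4*s) = s / (1 + sqrt (1 - 4*s^2))"
proof -
  define r where "r = sqrt (1 - 4*s^2)"
  have "r \<ge> 0" and "r^2 = 1 - 4*s^2"
    using assms(2) unfolding r_def by auto
  then have "(1 - r) * (1 + r) = 4*s*s" and "1 + r \<noteq> 0"
    by (auto simp: algebra_simps power2_eq_square)
  with assms(1) show ?thesis
    unfolding r_def[symmetric] by (simp add: divide_simps)
qed

lemma strict_mono_on_div_one_plus_sqrt: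
  "strict_mono_on {0..1/2} (\<lambda>s::real. s / (1 + sqrt (1 - 4*s^2)))"
proof (rule strict_mono_onI)
  fix s t :: real
  assume "s \<in> {0..1/2}" "t \<in> {0..1/2}" "s < t"
  then have le: "sqrt (1 - 4*t^2) \<le> sqrt (1 - 4*s^2)"
    using power_strict_mono[of s t 2] by simp
  have den_s: "0 < 1 + sqrt (1 - 4*s^2)" and den_t: "0 < 1 + sqrt (1 - 4*t^2)"
    using \<open>s \<in> {0..1/2}\<close> \<open>t \<in> {0..1/2}\<close> by (auto intro!: one_plus_sqrt_pos)
  have "s / (1 + sqrt (1 - 4*s^2)) < t / (1 + sqrt (1 - 4*s^2))"
    using \<open>s < t\<close> den_s by (rule divide_strict_right_mono)
  also have "\<dots> \<le> t / (1 + sqrt (1 - 4*t^2))"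
    using \<open>s < t\<close> \<open>s \<in> {0..1/2}\<close> le den_s den_t by (intro divide_left_mono) auto
  finally show "s / (1 + sqrt (1 - 4*s^2)) < t / (1 + sqrt (1 - 4*t^2))" .
qed

lemma strict_antimono_on_cos_minus_div_sin:
  fixes C :: real
  assumes "\<bar>C\<bar> \<le> 1"
  shows "strict_antimono_on {0<..<pi} (\<lambda>x. (cos x - C) / sin x)"
proof (rule monotone_onI)
  fix a b assume ab: "a \<in> {0<..<pi}" "b \<in> {0<..<pi}" "a < b"
  show "(cos b - C) / sin b < (cos a - C) / sin a"
  proof (rule DERIV_neg_imp_decreasing[OF \<open>a < b\<close>])
    fix x assume "a \<le> x" "x \<le> b"
    with ab have sin_pos: "sin x > 0"
      by (intro sin_gt_zero) auto
    then have "(cos x)^2 < 1"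
      using sin_cos_squared_add[of x, unfolded power2_eq_square] mult_pos_pos[OF sin_pos sin_pos]
      unfolding power2_eq_square by linarith
    then have "\<bar>cos x\<bar> < 1"
      by (simp add: abs_square_less_1)
    moreover have "\<bar>C\<bar> * \<bar>cos x\<bar> \<le> \<bar>cos x\<bar>"
      using assms by (intro mult_left_le_one_le) auto
    ultimately have "\<bar>C * cos x\<bar> < 1"
      by (simp add: abs_mult)
    then have "(C * cos x - 1) / (sin x)^2 < 0"
      using sin_pos by (simp add: divide_neg_pos)
    moreover have "DERIV (\<lambda>t. (cos t - C) / sin t) x :> (C * cos x - 1) / (sin x)^2"
    proof -
      have "DERIV (\<lambda>t. (cos t - C) / sin t) x
              :> (- sin x * sin x - (cos x - C) * cos x) / (sin x * sin x)"
        using sin_pos by (auto intro!: derivative_eq_intros)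
      also have "- sin x * sin x - (cos x - C) * cos x = C * cos x - 1"
        using sin_cos_squared_add[of x] by (simp add: power2_eq_square algebra_simps)
      finally show ?thesis by (simp add: power2_eq_square)
    qed
    ultimately show "\<exists>y. DERIV (\<lambda>t. (cos t - C) / sin t) x :> y \<and> y < 0"
      by blast
  qed
qed

definition trig_rhs :: "real \<Rightarrow> real" where
  "trig_rhs s = cos (2*pi*s) - s / (1 + sqrt (1 - 4*s^2)) * sin (2*pi*s)"

lemma trig_rhs_sqrt:
  fixes l :: real
  assumes "0 < l" "4*l \<le> 1"
  shows "cos (2*pi*sqrt l) - (1 - sqrt (1 - 4*l)) / (4 * sqrt l) * sin (2*pi*sqrt l)
           = trig_rhs (sqrt l)"
  using one_minus_sqrt_div_eq[of "sqrt l"] assms by (simp add: trig_rhs_def)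

lemma trig_rhs_0 [simp]: "trig_rhs 0 = 1"
  by (simp add: trig_rhs_def)

lemma continuous_on_trig_rhs: "continuous_on {0..1/2} trig_rhs"
proof -
  have "1 + sqrt (1 - 4*s^2) \<noteq> 0" if "s \<in> {0..1/2}" for s :: real
    using one_plus_sqrt_pos[of s] that by simp
  then show ?thesis
    unfolding trig_rhs_def by (intro continuous_intros) auto
qed

lemma trig_rhs_12_25_less: "trig_rhs (12/25) < -1"
proof -
  define x where "x = pi/25"
  have sqrt_eq: "sqrt (1 - 4*(12/25)^2) = (7/25::real)"
    by (rule real_sqrt_unique) (auto simp: power2_eq_square)
  have coeff: "(12/25) / (1 + sqrt (1 - 4*(12/25)^2)) = (3/8::real)"
    unfolding sqrt_eq by simp
  have angle: "2*pi*(12/25) = pi - x"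
    unfolding x_def by simp
  have rhs: "trig_rhs (12/25) = - cos x - 3/8 * sin x"
    unfolding trig_rhs_def coeff angle by simp
  have "0 < x" "x < pi/2" "x < 4/25"
    unfolding x_def using pi_gt_zero pi_less_4 by linarith+
  then have sin_pos: "sin x > 0" and "sin x < 48/73" and "cos x > 0"
    using sin_x_le_x[of x] by (auto intro!: sin_gt_zero cos_gt_zero)
  have "(1 - 3/8 * sin x)^2 = 1 - 3/4 * sin x + 9/64 * (sin x * sin x)"
    by (simp add: power2_eq_square algebra_simps)
  also have "\<dots> < 1 - sin x * sin x" \<comment> \<open>equivalent to \<open>sin x < 48/73\<close>\<close>
    using mult_strict_left_mono[OF \<open>sin x < 48/73\<close> sin_pos] by linarith
  also have "\<dots> = (cos x)^2"
    using cos_squared_eq[of x] by (simp add: power2_eq_square)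
  finally have "(1 - 3/8 * sin x)^2 < (cos x)^2" .
  then have "1 - 3/8 * sin x < cos x"
    by (rule power2_less_imp_less) (use \<open>cos x > 0\<close> in linarith)
  then show ?thesis
    unfolding rhs by linarith
qed

lemma trig_rhs_level_unique:
  fixes C s t :: real
  assumes "\<bar>C\<bar> \<le> 1" "s \<in> {0<..<1/2}" "t \<in> {0<..<1/2}" "trig_rhs s = C" "trig_rhs t = C"
  shows "s = t"
proof -
  define d where "d s = s / (1 + sqrt (1 - 4*s^2)) - (cos (2*pi*s) - C) / sin (2*pi*s)" for s
  have "strict_mono_on {0<..<1/2} d"
  proof (rule strict_mono_onI)
    fix u v :: real assume "u \<in> {0<..<1/2}" "v \<in> {0<..<1/2}" "u < v"
    then have "u / (1 + sqrt (1 - 4*u^2)) < v / (1 + sqrt (1 - 4*v^2))"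
      and "(cos (2*pi*v) - C) / sin (2*pi*v) < (cos (2*pi*u) - C) / sin (2*pi*u)"
      using strict_mono_onD[OF strict_mono_on_div_one_plus_sqrt, of u v]
        monotone_onD[OF strict_antimono_on_cos_minus_div_sin[OF assms(1)], of "2*pi*u" "2*pi*v"]
      by auto
    then show "d u < d v"
      unfolding d_def by linarith
  qed
  moreover have "d u = 0" if "u \<in> {0<..<1/2}" "trig_rhs u = C" for u
  proof -
    have "sin (2*pi*u) > 0"
      using that by (intro sin_gt_zero) auto
    moreover have "cos (2*pi*u) - C = u / (1 + sqrt (1 - 4*u^2)) * sin (2*pi*u)"
      using that(2) by (simp add: trig_rhs_def)
    ultimately show ?thesis
      by (simp add: d_def)
  qed
  ultimately show ?thesis
    using assms strict_mono_on_imp_inj_on by (metis inj_on_def)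
qed

lemma trig_rhs_below_level:
  fixes \<alpha> :: real
  assumes "0 < \<alpha>" "\<alpha> \<le> 1/2"
  obtains b where "0 < b" "b \<le> \<alpha>" "trig_rhs b < cos (2*pi*\<alpha>)"
proof (cases "\<alpha> < 1/2")
  case True
  have "\<alpha> / (1 + sqrt (1 - 4*\<alpha>^2)) > 0"
    using assms one_plus_sqrt_pos[of \<alpha>] by simp
  moreover have "sin (2*pi*\<alpha>) > 0"
    using assms True by (intro sin_gt_zero) auto
  ultimately have "\<alpha> / (1 + sqrt (1 - 4*\<alpha>^2)) * sin (2*pi*\<alpha>) > 0"
    by (rule mult_pos_pos)
  then have "trig_rhs \<alpha> < cos (2*pi*\<alpha>)"
    unfolding trig_rhs_def by linarith
  with assms that show ?thesis by blast
next
  case False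
  then have "\<alpha> = 1/2" using assms by simp
  then show ?thesis
    using that[of "12/25"] trig_rhs_12_25_less unfolding \<open>\<alpha> = 1/2\<close> by simp
qed

lemma trig_rhs_level_ex1:
  fixes \<alpha> :: real
  assumes "0 < \<alpha>" "\<alpha> \<le> 1/2"
  shows "\<exists>!s. s \<in> {0<..<\<alpha>} \<and> trig_rhs s = cos (2*pi*\<alpha>)"
proof -
  have "cos (2*pi*\<alpha>) < 1"
    using assms cos_monotone_0_pi[of 0 "2*pi*\<alpha>"] by auto
  obtain b where b: "0 < b" "b \<le> \<alpha>" "trig_rhs b < cos (2*pi*\<alpha>)"
    using trig_rhs_below_level[OF assms] .
  have "continuous_on {0..b} trig_rhs"
    using continuous_on_trig_rhs by (rule continuous_on_subset) (use b assms in auto)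
  then obtain s where "0 \<le> s" "s \<le> b" "trig_rhs s = cos (2*pi*\<alpha>)"
    using IVT2'[of trig_rhs b "cos (2*pi*\<alpha>)" 0] b \<open>cos (2*pi*\<alpha>) < 1\<close> by auto
  then have "s \<in> {0<..<\<alpha>}"
    using b \<open>cos (2*pi*\<alpha>) < 1\<close> by (cases "s = 0"; cases "s = b") auto
  moreover have "t = s" if "t \<in> {0<..<\<alpha>}" "trig_rhs t = cos (2*pi*\<alpha>)" for t
    using trig_rhs_level_unique[of "cos (2*pi*\<alpha>)" t s] that \<open>s \<in> {0<..<\<alpha>}\<close>
      \<open>trig_rhs s = cos (2*pi*\<alpha>)\<close> assms by auto
  ultimately show ?thesis
    using \<open>trig_rhs s = cos (2*pi*\<alpha>)\<close> by blast
qed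

lemma bij_betw_Ex1_iff:
  assumes "bij_betw f A B"
  shows "(\<exists>!x. x \<in> A \<and> P (f x)) \<longleftrightarrow> (\<exists>!y. y \<in> B \<and> P y)"
proof
  assume "\<exists>!x. x \<in> A \<and> P (f x)"
  then obtain x where x: "x \<in> A" "P (f x)" and unique: "\<And>x'. x' \<in> A \<Longrightarrow> P (f x') \<Longrightarrow> x' = x"
    by blast
  show "\<exists>!y. y \<in> B \<and> P y"
  proof (intro ex1I conjI)
    show "f x \<in> B" "P (f x)"
      using x assms by (auto simp: bij_betw_apply)
    fix y assume "y \<in> B \<and> P y"
    then show "y = f x"
      using assms unique[of "inv_into A f y"]
      by (metis bij_betw_imp_surj_on bij_betw_inv_into_right inv_into_into)
  qed
next
  assume "\<exists>!y. y \<in> B \<and> P y"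
  then obtain y where y: "y \<in> B" "P y" and unique: "\<And>y'. y' \<in> B \<Longrightarrow> P y' \<Longrightarrow> y' = y"
    by blast
  show "\<exists>!x. x \<in> A \<and> P (f x)"
  proof (intro ex1I conjI)
    show "inv_into A f y \<in> A" "P (f (inv_into A f y))"
      using y assms by (auto simp: bij_betw_inv_into_right bij_betw_imp_surj_on inv_into_into)
    fix x assume "x \<in> A \<and> P (f x)"
    then show "x = inv_into A f y"
      using assms unique[of "f x"] by (metis bij_betw_apply bij_betw_inv_into_left)
  qed
qed

lemma bij_betw_sqrt_interval:
  fixes a :: real
  assumes "0 \<le> a"
  shows "bij_betw sqrt {0<..<a^2} {0<..<a}"
proof (rule bij_betw_byWitness[where f' = "\<lambda>s. s^2"])
  show "sqrt ` {0<..<a^2} \<subseteq> {0<..<a}"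
    using assms real_sqrt_less_mono[of _ "a^2"] by fastforce
  show "(\<lambda>s. s^2) ` {0<..<a} \<subseteq> {0<..<a^2}"
    using assms by (auto intro!: power_strict_mono)
qed auto

theorem lemma4p1:
  fixes \<alpha> :: real
  assumes "0 < \<alpha>" and "\<alpha> \<le> 1/2"
  shows "\<exists>!l::real. l \<in> {0<..<\<alpha>^2} \<and>
           cos (2*pi*\<alpha>) = cos (2*pi*sqrt l)
             - (1 - sqrt (1 - 4*l)) / (4 * sqrt l) * sin (2*pi*sqrt l)"
proof -
  have "4*\<alpha>^2 \<le> 1"
    using assms by (intro four_sq_le_one) auto
  then have "cos (2*pi*sqrt l) - (1 - sqrt (1 - 4*l)) / (4 * sqrt l) * sin (2*pi*sqrt l)
               = trig_rhs (sqrt l)" if "l \<in> {0<..<\<alpha>^2}" for l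
    using that by (intro trig_rhs_sqrt) auto
  then have "(\<lambda>l. l \<in> {0<..<\<alpha>^2} \<and> cos (2*pi*\<alpha>) = cos (2*pi*sqrt l)
                - (1 - sqrt (1 - 4*l)) / (4 * sqrt l) * sin (2*pi*sqrt l))
           = (\<lambda>l. l \<in> {0<..<\<alpha>^2} \<and> trig_rhs (sqrt l) = cos (2*pi*\<alpha>))"
    by auto
  moreover have "\<exists>!l. l \<in> {0<..<\<alpha>^2} \<and> trig_rhs (sqrt l) = cos (2*pi*\<alpha>)"
    using bij_betw_Ex1_iff[OF bij_betw_sqrt_interval, of \<alpha> "\<lambda>s. trig_rhs s = cos (2*pi*\<alpha>)"]
      trig_rhs_level_ex1[OF assms] assms by simp
  ultimately show ?thesis
    by simp
qed

end
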